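(* Let $\mathscr{H}$ be a complex Hilbert space, $N(\cdot)$ a norm on $\mathbb{B}(\mathscr{H})$, and $B,C\in\mathbb{B}(\mathscr{H})$. Then: (a) $w_{(N,e)}(B,C)=\frac{1}{\sqrt2}\,w_{(N,e)}(B+C,B-C)$; (b) $w_{(N,e)}(\Re B,\Im B)=\frac{1}{\sqrt2}\,w_{(N,e)}(B,B^* )=w_N(B)$; (c) $w_{(N,e)}(B,B)=\sqrt2\, w_N(B)$; (d) $w_{(N,e)}(B^*,C^* )=w_{(N,e)}(B,C)$; (e) if $N$ is weakly unitarily invariant, i.e. $N(U^*TU)=N(T)$ for all $T\in\mathbb{B}(\mathscr{H})$ and all unitary $U\in\mathbb{B}(\mathscr{H})$, then $w_{(N,e)}(U^*BU,U^*CU)=w_{(N,e)}(B,C)$ for every unitary $U\in\mathbb{B}(\mathscr{H})$; (f) $$w_{(N,e)}(B,C)=\sup_{|\lambda_1|^2+|\lambda_2|^2\leq1}\ \sup_{\alpha,\beta\in\mathbb{R},\ \alpha^2+\beta^2=1} N\big(\alpha\Re(\lambda_1B+\lambda_2C)+\beta\Im(\lambda_1B+\lambda_2C)\big),$$ where $\lambda_1,\lambda_2$ range over $\mathbb{C}$.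
   Context: For $T\in\mathbb{B}(\mathscr{H})$: $\Re(T)=\frac12(T+T^* )$, $\Im(T)=\frac{1}{2i}(T-T^* )$, and $w_N(T)=\sup_{\theta\in\mathbb{R}}N(\Re(e^{i\theta}T))$. For $B,C\in\mathbb{B}(\mathscr{H})$, $w_{(N,e)}(B,C)=\sup_{\lambda_1,\lambda_2\in\mathbb{C},\ |\lambda_1|^2+|\lambda_2|^2\leq 1}\sup_{\theta\in\mathbb{R}} N(\Re(e^{i\theta}(\lambda_1B+\lambda_2C)))$. *)

theory Defs
  imports "HOL-Analysis.Analysis"
begin

class complex_vector = real_vector +
  fixes scaleC :: "complex \<Rightarrow> 'a \<Rightarrow> 'a" (infixr \<open>*\<^sub>C\<close> 75)
  assumes scaleC_add_right: "a *\<^sub>C (x + y) = a *\<^sub>C x + a *\<^sub>C y"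
    and scaleC_add_left: "(a + b) *\<^sub>C x = a *\<^sub>C x + b *\<^sub>C x"
    and scaleC_scaleC: "a *\<^sub>C (b *\<^sub>C x) = (a * b) *\<^sub>C x"
    and scaleC_one: "1 *\<^sub>C x = x"
    and scaleR_scaleC: "scaleR r x = (complex_of_real r) *\<^sub>C x"

class complex_inner = complex_vector + real_normed_vector +
  fixes cinner :: "'a \<Rightarrow> 'a \<Rightarrow> complex"
  assumes cinner_commute: "cinner x y = cnj (cinner y x)"
    and cinner_add_left: "cinner (x + y) z = cinner x z + cinner y z"
    and cinner_scaleC_left: "cinner (c *\<^sub>C x) y = c * cinner x y"
    and cinner_ge_zero: "0 \<le> Re (cinner x x)"
    and cinner_eq_zero_iff: "cinner x x = 0 \<longleftrightarrow> x = 0"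
    and norm_eq_sqrt_cinner: "norm x = sqrt (Re (cinner x x))"

text \<open>A complex Hilbert space is a type of sort \<open>{complex_inner, complete_space}\<close>.\<close>

definition bounded_op :: "('h::complex_inner \<Rightarrow> 'h) \<Rightarrow> bool" where
  "bounded_op T \<longleftrightarrow> (\<forall>x y. T (x + y) = T x + T y) \<and> (\<forall>c x. T (c *\<^sub>C x) = c *\<^sub>C T x)
     \<and> (\<exists>K. \<forall>x. norm (T x) \<le> K * norm x)"

definition cadjoint :: "('h::complex_inner \<Rightarrow> 'h) \<Rightarrow> ('h \<Rightarrow> 'h)" where
  "cadjoint T = (SOME S. bounded_op S \<and> (\<forall>x y. cinner (T x) y = cinner x (S y)))"

definition op_add :: "('h::complex_inner \<Rightarrow> 'h) \<Rightarrow> ('h \<Rightarrow> 'h) \<Rightarrow> ('h \<Rightarrow> 'h)" where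
  "op_add S T = (\<lambda>x. S x + T x)"

definition op_diff :: "('h::complex_inner \<Rightarrow> 'h) \<Rightarrow> ('h \<Rightarrow> 'h) \<Rightarrow> ('h \<Rightarrow> 'h)" where
  "op_diff S T = (\<lambda>x. S x - T x)"

definition op_scale :: "complex \<Rightarrow> ('h::complex_inner \<Rightarrow> 'h) \<Rightarrow> ('h \<Rightarrow> 'h)" where
  "op_scale c T = (\<lambda>x. c *\<^sub>C T x)"

definition ReOp :: "('h::complex_inner \<Rightarrow> 'h) \<Rightarrow> ('h \<Rightarrow> 'h)" where
  "ReOp T = op_scale (1/2) (op_add T (cadjoint T))"

definition ImOp :: "('h::complex_inner \<Rightarrow> 'h) \<Rightarrow> ('h \<Rightarrow> 'h)" where
  "ImOp T = op_scale (1 / (2 * \<i>)) (op_diff T (cadjoint T))"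

definition unitary_op :: "('h::complex_inner \<Rightarrow> 'h) \<Rightarrow> bool" where
  "unitary_op U \<longleftrightarrow> bounded_op U \<and> cadjoint U \<circ> U = id \<and> U \<circ> cadjoint U = id"

text \<open>A norm on \<open>\<bbbB>(H)\<close> (only its values on bounded operators matter).\<close>
definition is_op_norm :: "(('h::complex_inner \<Rightarrow> 'h) \<Rightarrow> real) \<Rightarrow> bool" where
  "is_op_norm N \<longleftrightarrow>
     (\<forall>T. bounded_op T \<longrightarrow> 0 \<le> N T) \<and>
     (\<forall>T. bounded_op T \<longrightarrow> (N T = 0 \<longleftrightarrow> T = (\<lambda>x. 0))) \<and>
     (\<forall>c T. bounded_op T \<longrightarrow> N (op_scale c T) = cmod c * N T) \<and>
     (\<forall>S T. bounded_op S \<longrightarrow> bounded_op T \<longrightarrow> N (op_add S T) \<le> N S + N T)"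

definition weakly_unitarily_invariant :: "(('h::complex_inner \<Rightarrow> 'h) \<Rightarrow> real) \<Rightarrow> bool" where
  "weakly_unitarily_invariant N \<longleftrightarrow>
     (\<forall>T U. bounded_op T \<longrightarrow> unitary_op U \<longrightarrow> N (cadjoint U \<circ> T \<circ> U) = N T)"

definition wN :: "(('h::complex_inner \<Rightarrow> 'h) \<Rightarrow> real) \<Rightarrow> ('h \<Rightarrow> 'h) \<Rightarrow> real" where
  "wN N T = (SUP \<theta>\<in>(UNIV::real set). N (ReOp (op_scale (exp (\<i> * complex_of_real \<theta>)) T)))"

definition unit_pairs :: "(complex \<times> complex) set" where
  "unit_pairs = {(l1, l2). (cmod l1)\<^sup>2 + (cmod l2)\<^sup>2 \<le> 1}"

definition wNe :: "(('h::complex_inner \<Rightarrow> 'h) \<Rightarrow> real) \<Rightarrow> ('h \<Rightarrow> 'h) \<Rightarrow> ('h \<Rightarrow> 'h) \<Rightarrow> real" where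
  "wNe N B C = (SUP l\<in>unit_pairs. SUP \<theta>\<in>(UNIV::real set).
      N (ReOp (op_scale (exp (\<i> * complex_of_real \<theta>))
                 (op_add (op_scale (fst l) B) (op_scale (snd l) C)))))"

end

theory Submission
  imports Defs
begin

(*
  w_N is a seminorm on bounded operators, invariant under taking adjoints, and w_(N,e)(B,C) is
  the supremum of w_N(l1 B + l2 C) over the unit ball |l1|^2 + |l2|^2 <= 1 of C^2.  For (a),
  (b) and (d) this ball is reparametrised by unitary maps of C^2: the Hadamard map
  (l1, l2) |-> ((l1 + l2)/sqrt 2, (l1 - l2)/sqrt 2), possibly preceded by l2 |-> -i l2, and
  complex conjugation.  They carry the combinations of one pair of operators to sqrt 2 times
  (resp. the adjoints of) the combinations of the other.  For (b) and (c), w_N of a combination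
  of B with B or with its adjoint is at most (|l1| + |l2|) w_N(B) <= sqrt 2 w_N(B); equality is
  attained at l1 = l2 = 1/sqrt 2 for (c), and for (b) at l1 = e^(i t)/sqrt 2,
  l2 = e^(-i t)/sqrt 2, where the combination is sqrt 2 Re(e^(i t) B).  Part (e) holds term by
  term, and (f) is Re(e^(i t) X) = cos t Re X - sin t Im X.
  As the adjoint is defined by choice, its algebra rests on the Riesz representation theorem,
  proved by minimising |x|^2/2 - Re f(x).
*)

section \<open>Complex inner product spaces\<close>

declare cinner_add_left [simp] cinner_scaleC_left [simp]

lemma cinner_zero_left [simp]: "cinner 0 x = 0"
  using cinner_add_left [of 0 0 x] by simp

lemma cinner_minus_left [simp]: "cinner (- x) y = - cinner x y"
proof -
  have "cinner x y + cinner (- x) y = 0"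
    using cinner_add_left [of x "- x" y] by simp
  then show ?thesis
    by (simp add: eq_neg_iff_add_eq_0 add.commute)
qed

lemma cinner_diff_left [simp]: "cinner (x - y) z = cinner x z - cinner y z"
  using cinner_add_left [of x "- y" z] by simp

lemma cinner_add_right [simp]: "cinner x (y + z) = cinner x y + cinner x z"
  by (metis cinner_add_left cinner_commute complex_cnj_add)

lemma cinner_scaleC_right [simp]: "cinner x (c *\<^sub>C y) = cnj c * cinner x y"
  by (metis cinner_scaleC_left cinner_commute complex_cnj_mult)

lemma cinner_diff_right [simp]: "cinner x (y - z) = cinner x y - cinner x z"
  by (metis cinner_commute cinner_diff_left complex_cnj_diff)

lemma cinner_scaleR_left [simp]: "cinner (r *\<^sub>R x) y = of_real r * cinner x y"
  by (simp add: scaleR_scaleC)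

lemma cinner_scaleR_right [simp]: "cinner x (r *\<^sub>R y) = of_real r * cinner x y"
  by (simp add: scaleR_scaleC)

lemma cinner_self: "cinner x x = of_real ((norm x)\<^sup>2)"
proof (rule complex_eqI)
  show "Im (cinner x x) = Im (of_real ((norm x)\<^sup>2))"
    using arg_cong [OF cinner_commute [of x x], of Im] by simp
  show "Re (cinner x x) = Re (of_real ((norm x)\<^sup>2))"
    using cinner_ge_zero [of x] by (simp add: norm_eq_sqrt_cinner)
qed

lemma norm_square_eq_Re_cinner: "(norm x)\<^sup>2 = Re (cinner x x)"
  by (simp add: cinner_self)

lemma norm_scaleC:
  fixes x :: "'a::complex_inner"
  shows "norm (c *\<^sub>C x) = cmod c * norm x"
proof -
  have "cinner (c *\<^sub>C x) (c *\<^sub>C x) = (c * cnj c) * cinner x x"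
    by (simp add: mult.assoc)
  also have "\<dots> = of_real ((cmod c)\<^sup>2) * of_real ((norm x)\<^sup>2)"
    by (simp add: cinner_self complex_norm_square del: of_real_power)
  finally have "(norm (c *\<^sub>C x))\<^sup>2 = (cmod c * norm x)\<^sup>2"
    by (metis cinner_self of_real_eq_iff of_real_mult power_mult_distrib)
  then show ?thesis
    by (simp add: power2_eq_iff_nonneg)
qed

lemma cinner_left_eq_imp_eq: "(\<And>z. cinner x z = cinner y z) \<Longrightarrow> x = y"
  by (metis cinner_diff_left cinner_eq_zero_iff eq_iff_diff_eq_0)

lemma cinner_right_eq_imp_eq: "(\<And>z. cinner z x = cinner z y) \<Longrightarrow> x = y"
  by (metis cinner_left_eq_imp_eq cinner_commute)

lemma norm_cinner_le: "cmod (cinner x y) \<le> norm x * norm y"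
proof (cases "y = 0")
  case True
  then show ?thesis
    by (metis cinner_commute cinner_zero_left complex_cnj_zero norm_zero mult_zero_right
        order_refl)
next
  case False
  define n where "n = (norm y)\<^sup>2"
  have n: "n > 0"
    using False by (simp add: n_def)
  define a where "a = cinner x y"
  define t where "t = a / of_real n"
  have "cinner (x - t *\<^sub>C y) (x - t *\<^sub>C y)
      = cinner x x - cnj t * a - t * cnj a + t * cnj t * of_real n"
    by (simp add: a_def n_def cinner_self [of y] algebra_simps cinner_commute [of y x])
  also have "\<dots> = of_real ((norm x)\<^sup>2 - (cmod a)\<^sup>2 / n)"
    using n by (simp add: t_def cinner_self field_simps complex_norm_square del: of_real_power)
  finally have "0 \<le> (norm x)\<^sup>2 - (cmod a)\<^sup>2 / n"
    by (metis Re_complex_of_real cinner_ge_zero)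
  then have "(cmod a)\<^sup>2 \<le> (norm x * norm y)\<^sup>2"
    using n by (simp add: field_simps n_def power_mult_distrib)
  then show ?thesis
    unfolding a_def by (rule power2_le_imp_le) simp
qed

lemma parallelogram_law:
  fixes x y :: "'a::complex_inner"
  shows "(norm (x + y))\<^sup>2 + (norm (x - y))\<^sup>2 = 2 * (norm x)\<^sup>2 + 2 * (norm y)\<^sup>2"
  by (simp add: norm_square_eq_Re_cinner)

lemma quadratic_nonneg_imp_linear_coeff_zero:
  fixes a b :: real
  assumes nonneg: "\<And>t. 0 \<le> t * a + t\<^sup>2 * b" and b: "b \<ge> 0"
  shows "a = 0"
proof (rule ccontr)
  assume "a \<noteq> 0"
  define t where "t = - a / (2 * b + 1)"
  have "t \<noteq> 0" and a: "a = - t * (2 * b + 1)"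
    using \<open>a \<noteq> 0\<close> b by (simp_all add: t_def)
  have "t * a + t\<^sup>2 * b = - (t\<^sup>2 * (b + 1))"
    unfolding a by (simp add: power2_eq_square algebra_simps)
  also have "\<dots> < 0"
    using \<open>t \<noteq> 0\<close> b by simp
  finally show False
    using nonneg [of t] by simp
qed

lemma energy_minimizer_exists:
  fixes g :: "'a::{complex_inner,complete_space} \<Rightarrow> real"
  assumes g: "bounded_linear g"
  shows "\<exists>z. \<forall>w. (norm z)\<^sup>2 / 2 - g z \<le> (norm w)\<^sup>2 / 2 - g w"
proof -
  define \<phi> where "\<phi> x = (norm x)\<^sup>2 / 2 - g x" for x
  obtain K where K: "\<And>x. norm (g x) \<le> norm x * K"
    using bounded_linear.bounded [OF g] by blast
  have "- K\<^sup>2 / 2 \<le> \<phi> x" for x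
  proof -
    have "g x \<le> norm x * K"
      using K [of x] by simp
    moreover have "2 * (norm x * K) \<le> (norm x)\<^sup>2 + K\<^sup>2"
      using sum_squares_bound [of "norm x" K] by (simp add: power2_eq_square)
    ultimately show ?thesis
      unfolding \<phi>_def by linarith
  qed
  then have bdd: "bdd_below (range \<phi>)"
    by (intro bdd_belowI2)
  define m where "m = Inf (range \<phi>)"
  have m_le: "m \<le> \<phi> x" for x
    unfolding m_def using bdd by (simp add: cInf_lower)
  \<comment> \<open>the parallelogram law makes \<open>\<phi>\<close> uniformly convex\<close>
  have dist_bound: "(norm (x - y))\<^sup>2 \<le> 4 * \<phi> x + 4 * \<phi> y - 8 * m" for x y
  proof -
    define mid where "mid = (1/2) *\<^sub>R (x + y)"
    have "g mid = (g x + g y) / 2"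
      using linear_scale [OF bounded_linear.linear [OF g]] linear_add [OF bounded_linear.linear [OF g]]
      by (simp add: mid_def)
    moreover have "(norm mid)\<^sup>2 = (norm (x + y))\<^sup>2 / 4"
      by (simp add: mid_def power2_eq_square)
    ultimately have "\<phi> mid = (\<phi> x + \<phi> y) / 2 - (norm (x - y))\<^sup>2 / 8"
      using parallelogram_law [of x y] unfolding \<phi>_def by (simp add: field_simps)
    then show ?thesis
      using m_le [of mid] by (simp add: field_simps)
  qed
  have "\<exists>x. \<phi> x < m + inverse (real (Suc n))" for n
    using bdd cInf_less_iff [of "range \<phi>" "m + inverse (real (Suc n))"] by (simp add: m_def)
  then obtain xs where xs: "\<And>n. \<phi> (xs n) < m + inverse (real (Suc n))"
    by metis
  have "Cauchy xs"
  proof (rule CauchyI)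
    fix e :: real
    assume "0 < e"
    obtain M :: nat where M: "8 / e\<^sup>2 < real (Suc M)"
      using reals_Archimedean2 by (metis less_Suc_eq of_nat_less_iff order_less_trans)
    have "norm (xs p - xs q) < e" if "p \<ge> M" "q \<ge> M" for p q
    proof -
      have "inverse (real (Suc p)) \<le> inverse (real (Suc M))"
        and "inverse (real (Suc q)) \<le> inverse (real (Suc M))"
        using that by (simp_all add: field_simps)
      then have "(norm (xs p - xs q))\<^sup>2 < 8 * inverse (real (Suc M))"
        using dist_bound [of "xs p" "xs q"] xs [of p] xs [of q] by linarith
      also have "\<dots> < e\<^sup>2"
        using M \<open>0 < e\<close> by (simp add: field_simps)
      finally show ?thesis
        using \<open>0 < e\<close> by (simp add: power_less_imp_less_base)
    qed
    then show "\<exists>M. \<forall>m\<ge>M. \<forall>n\<ge>M. norm (xs m - xs n) < e"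
      by blast
  qed
  then obtain z where "xs \<longlonglongrightarrow> z"
    using Cauchy_convergent_iff convergent_def by blast
  then have "(\<lambda>n. \<phi> (xs n)) \<longlonglongrightarrow> \<phi> z"
    unfolding \<phi>_def by (intro tendsto_intros bounded_linear.tendsto [OF g]) simp_all
  moreover have "(\<lambda>n. m + inverse (real (Suc n))) \<longlonglongrightarrow> m"
    using tendsto_add [OF tendsto_const LIMSEQ_inverse_real_of_nat, of m] by simp
  ultimately have "\<phi> z \<le> m"
    using xs by (intro LIMSEQ_le) (auto intro: less_imp_le)
  then show ?thesis
    using m_le unfolding \<phi>_def by (meson order_trans)
qed

theorem riesz_representation:
  fixes f :: "'a::{complex_inner,complete_space} \<Rightarrow> complex"
  assumes add: "\<And>x y. f (x + y) = f x + f y"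
    and scale: "\<And>c x. f (c *\<^sub>C x) = c * f x"
    and bound: "\<And>x. cmod (f x) \<le> K * norm x"
  shows "\<exists>z. \<forall>x. f x = cinner x z"
proof -
  have f_scaleR: "f (r *\<^sub>R x) = of_real r * f x" for r x
    by (simp add: scaleR_scaleC scale)
  have "bounded_linear (\<lambda>x. Re (f x))"
  proof (rule bounded_linear_intro [where K = K])
    show "norm (Re (f x)) \<le> norm x * K" for x
      using abs_Re_le_cmod [of "f x"] bound [of x] by (simp add: mult.commute)
  qed (simp_all add: add f_scaleR)
  then obtain z where z: "\<And>w. (norm z)\<^sup>2 / 2 - Re (f z) \<le> (norm w)\<^sup>2 / 2 - Re (f w)"
    using energy_minimizer_exists by blast
  \<comment> \<open>first variation of the energy at its minimizer \<open>z\<close> in the direction \<open>h\<close>\<close>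
  have Re_eq: "Re (f h) = Re (cinner h z)" for h
  proof -
    have "Re (cinner z h) = Re (cinner h z)"
      using arg_cong [OF cinner_commute [of z h], of Re] by simp
    then have "(norm (z + t *\<^sub>R h))\<^sup>2
        = (norm z)\<^sup>2 + 2 * t * Re (cinner h z) + t\<^sup>2 * (norm h)\<^sup>2" for t
      unfolding norm_square_eq_Re_cinner by (simp add: power2_eq_square algebra_simps)
    then have "0 \<le> t * (Re (cinner h z) - Re (f h)) + t\<^sup>2 * ((norm h)\<^sup>2 / 2)" for t
      using z [of "z + t *\<^sub>R h"] by (simp add: add f_scaleR algebra_simps)
    then have "Re (cinner h z) - Re (f h) = 0"
      by (rule quadratic_nonneg_imp_linear_coeff_zero) simp
    then show ?thesis
      by simp
  qed
  have "f h = cinner h z" for h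
  proof (rule complex_eqI)
    show "Re (f h) = Re (cinner h z)"
      by (rule Re_eq)
    show "Im (f h) = Im (cinner h z)"
      using Re_eq [of "\<i> *\<^sub>C h"] by (simp add: scale)
  qed
  then show ?thesis
    by blast
qed

section \<open>Bounded operators and adjoints\<close>

lemma op_eqI: "(\<And>x z. cinner (S x) z = cinner (T x) z) \<Longrightarrow> S = T"
  by (rule ext, rule cinner_left_eq_imp_eq)

lemma op_add_commute: "op_add S T = op_add T S"
  by (simp add: op_add_def add.commute)

lemma op_scale_op_scale [simp]: "op_scale a (op_scale b T) = op_scale (a * b) T"
  by (simp add: op_scale_def scaleC_scaleC)

lemma op_scale_1 [simp]: "op_scale 1 T = T"
  by (simp add: op_scale_def scaleC_one)

lemma op_scale_add: "op_scale c (op_add S T) = op_add (op_scale c S) (op_scale c T)"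
  by (simp add: op_scale_def op_add_def scaleC_add_right)

lemma op_diff_eq_add_scale: "op_diff S T = op_add S (op_scale (- 1) T)"
  unfolding op_diff_def op_add_def op_scale_def
  by (metis diff_conv_add_uminus of_real_1 of_real_minus scaleR_minus1_left scaleR_scaleC)

lemma bounded_opI:
  assumes "\<And>x y. T (x + y) = T x + T y" and "\<And>c x. T (c *\<^sub>C x) = c *\<^sub>C T x"
    and "\<And>x. norm (T x) \<le> K * norm x"
  shows "bounded_op T"
  using assms unfolding bounded_op_def by blast

lemma bounded_op_additive: "bounded_op T \<Longrightarrow> T (x + y) = T x + T y"
  and bounded_op_scaleC: "bounded_op T \<Longrightarrow> T (c *\<^sub>C x) = c *\<^sub>C T x"
  unfolding bounded_op_def by auto

lemma bounded_op_bound: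
  assumes "bounded_op T"
  obtains K where "K \<ge> 0" and "\<And>x. norm (T x) \<le> K * norm x"
proof -
  obtain K where K: "\<And>x. norm (T x) \<le> K * norm x"
    using assms unfolding bounded_op_def by blast
  have "norm (T x) \<le> max K 0 * norm x" for x
    using K [of x] by (meson max.cobounded1 mult_right_mono norm_ge_zero order_trans)
  then show ?thesis
    using that [of "max K 0"] by simp
qed

lemma bounded_op_add [simp]:
  assumes S: "bounded_op S" and T: "bounded_op T"
  shows "bounded_op (op_add S T)"
proof -
  obtain K1 K2 where K1: "\<And>x. norm (S x) \<le> K1 * norm x"
    and K2: "\<And>x. norm (T x) \<le> K2 * norm x"
    using bounded_op_bound [OF S] bounded_op_bound [OF T] by metis
  have "norm (S x + T x) \<le> (K1 + K2) * norm x" for x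
    using norm_triangle_le [OF add_mono [OF K1 K2]] by (simp add: distrib_right)
  then show ?thesis
    unfolding op_add_def using S T
    by (intro bounded_opI) (auto simp: bounded_op_additive bounded_op_scaleC scaleC_add_right)
qed

lemma bounded_op_scale [simp]:
  assumes T: "bounded_op T"
  shows "bounded_op (op_scale c T)"
proof -
  obtain K where "K \<ge> 0" and K: "\<And>x. norm (T x) \<le> K * norm x"
    using bounded_op_bound [OF T] by metis
  have "norm (c *\<^sub>C T x) \<le> (cmod c * K) * norm x" for x
    using K [of x] by (simp add: norm_scaleC mult.assoc mult_left_mono)
  then show ?thesis
    unfolding op_scale_def using T
    by (intro bounded_opI [where K = "cmod c * K"])
      (auto simp: bounded_op_additive bounded_op_scaleC scaleC_add_right scaleC_scaleC mult.commute)
qed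

lemma bounded_op_diff [simp]: "bounded_op S \<Longrightarrow> bounded_op T \<Longrightarrow> bounded_op (op_diff S T)"
  by (simp add: op_diff_eq_add_scale)

lemma bounded_op_comp [simp]:
  assumes S: "bounded_op S" and T: "bounded_op T"
  shows "bounded_op (S \<circ> T)"
proof -
  obtain K1 K2 where "K1 \<ge> 0" and K1: "\<And>x. norm (S x) \<le> K1 * norm x"
    and K2: "\<And>x. norm (T x) \<le> K2 * norm x"
    using bounded_op_bound [OF S] bounded_op_bound [OF T] by metis
  have "norm (S (T x)) \<le> (K1 * K2) * norm x" for x
    using order_trans [OF K1 [of "T x"] mult_left_mono [OF K2 \<open>K1 \<ge> 0\<close>]]
    by (simp add: mult.assoc)
  then show ?thesis
    using S T by (intro bounded_opI) (auto simp: bounded_op_additive bounded_op_scaleC)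
qed

lemma cadjoint_exists:
  fixes T :: "'a::{complex_inner,complete_space} \<Rightarrow> 'a"
  assumes T: "bounded_op T"
  shows "\<exists>S. bounded_op S \<and> (\<forall>x y. cinner (T x) y = cinner x (S y))"
proof -
  obtain K where "K \<ge> 0" and K: "\<And>x. norm (T x) \<le> K * norm x"
    using bounded_op_bound [OF T] by metis
  have "\<exists>z. \<forall>x. cinner (T x) y = cinner x z" for y
  proof (rule riesz_representation [where K = "K * norm y"])
    show "cmod (cinner (T x) y) \<le> K * norm y * norm x" for x
      using norm_cinner_le [of "T x" y] mult_right_mono [OF K [of x], of "norm y"]
      by (simp add: algebra_simps)
  qed (simp_all add: bounded_op_additive [OF T] bounded_op_scaleC [OF T])
  then obtain S where S: "\<And>x y. cinner (T x) y = cinner x (S y)"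
    by metis
  have "norm (S y) \<le> K * norm y" for y
  proof -
    have "(norm (S y))\<^sup>2 \<le> cmod (cinner (T (S y)) y)"
      using complex_Re_le_cmod by (simp add: norm_square_eq_Re_cinner S)
    also have "\<dots> \<le> K * norm (S y) * norm y"
      using norm_cinner_le [of "T (S y)" y] mult_right_mono [OF K [of "S y"], of "norm y"]
      by simp
    finally show ?thesis
      using \<open>K \<ge> 0\<close> by (cases "S y = 0") (simp_all add: power2_eq_square mult.assoc)
  qed
  then have "bounded_op S"
    by (intro bounded_opI) (auto intro: cinner_right_eq_imp_eq simp flip: S)
  with S show ?thesis
    by blast
qed

context
  fixes T :: "'a::{complex_inner,complete_space} \<Rightarrow> 'a"
  assumes T: "bounded_op T"
begin

lemma bounded_op_cadjoint [simp]: "bounded_op (cadjoint T)"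
  and cinner_cadjoint: "cinner x (cadjoint T y) = cinner (T x) y"
  using someI_ex [OF cadjoint_exists [OF T]] unfolding cadjoint_def by metis+

lemma cinner_cadjoint_left: "cinner (cadjoint T y) x = cinner y (T x)"
  by (metis cinner_cadjoint cinner_commute)

lemma cadjoint_eqI: "(\<And>x y. cinner (T x) y = cinner x (S y)) \<Longrightarrow> cadjoint T = S"
  by (rule ext, rule cinner_right_eq_imp_eq) (simp add: cinner_cadjoint)

end

lemma cadjoint_cadjoint [simp]:
  fixes T :: "'a::{complex_inner,complete_space} \<Rightarrow> 'a"
  shows "bounded_op T \<Longrightarrow> cadjoint (cadjoint T) = T"
  by (rule cadjoint_eqI) (simp_all add: cinner_cadjoint_left)

lemma cadjoint_add [simp]:
  fixes S T :: "'a::{complex_inner,complete_space} \<Rightarrow> 'a"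
  shows "bounded_op S \<Longrightarrow> bounded_op T \<Longrightarrow>
    cadjoint (op_add S T) = op_add (cadjoint S) (cadjoint T)"
  by (rule cadjoint_eqI) (simp, simp add: op_add_def cinner_cadjoint)

lemma cadjoint_scale [simp]:
  fixes T :: "'a::{complex_inner,complete_space} \<Rightarrow> 'a"
  shows "bounded_op T \<Longrightarrow> cadjoint (op_scale c T) = op_scale (cnj c) (cadjoint T)"
  by (rule cadjoint_eqI) (simp, simp add: op_scale_def cinner_cadjoint)

lemma cadjoint_comp [simp]:
  fixes S T :: "'a::{complex_inner,complete_space} \<Rightarrow> 'a"
  shows "bounded_op S \<Longrightarrow> bounded_op T \<Longrightarrow> cadjoint (S \<circ> T) = cadjoint T \<circ> cadjoint S"
  by (rule cadjoint_eqI) (simp_all add: cinner_cadjoint)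

lemma bounded_op_ReOp [simp]:
  fixes T :: "'a::{complex_inner,complete_space} \<Rightarrow> 'a"
  shows "bounded_op T \<Longrightarrow> bounded_op (ReOp T)"
  by (simp add: ReOp_def)

lemma bounded_op_ImOp [simp]:
  fixes T :: "'a::{complex_inner,complete_space} \<Rightarrow> 'a"
  shows "bounded_op T \<Longrightarrow> bounded_op (ImOp T)"
  by (simp add: ImOp_def)

lemma ReOp_add:
  fixes S T :: "'a::{complex_inner,complete_space} \<Rightarrow> 'a"
  shows "bounded_op S \<Longrightarrow> bounded_op T \<Longrightarrow> ReOp (op_add S T) = op_add (ReOp S) (ReOp T)"
  by (simp add: ReOp_def, rule op_eqI) (simp add: op_scale_def op_add_def algebra_simps)

lemma ReOp_scale_real:
  fixes T :: "'a::{complex_inner,complete_space} \<Rightarrow> 'a"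
  shows "bounded_op T \<Longrightarrow> ReOp (op_scale (of_real r) T) = op_scale (of_real r) (ReOp T)"
  by (simp add: ReOp_def, rule op_eqI) (simp add: op_scale_def op_add_def algebra_simps)

lemma ReOp_cadjoint:
  fixes T :: "'a::{complex_inner,complete_space} \<Rightarrow> 'a"
  shows "bounded_op T \<Longrightarrow> ReOp (cadjoint T) = ReOp T"
  unfolding ReOp_def by (simp add: op_add_commute)

lemma cadjoint_ReOp:
  fixes T :: "'a::{complex_inner,complete_space} \<Rightarrow> 'a"
  shows "bounded_op T \<Longrightarrow> cadjoint (ReOp T) = ReOp T"
  unfolding ReOp_def by (simp add: op_add_commute)

lemma ReOp_ReOp:
  fixes T :: "'a::{complex_inner,complete_space} \<Rightarrow> 'a"
  shows "bounded_op T \<Longrightarrow> ReOp (ReOp T) = ReOp T"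
  unfolding ReOp_def [of "ReOp T"]
  by (simp add: cadjoint_ReOp, rule op_eqI) (simp add: op_scale_def op_add_def)

lemma ReOp_unitary_conj:
  fixes X U :: "'a::{complex_inner,complete_space} \<Rightarrow> 'a"
  shows "bounded_op X \<Longrightarrow> bounded_op U \<Longrightarrow>
    ReOp (op_scale e (cadjoint U \<circ> X \<circ> U)) = cadjoint U \<circ> ReOp (op_scale e X) \<circ> U"
  by (simp add: ReOp_def, rule op_eqI) (simp add: op_add_def op_scale_def cinner_cadjoint_left)

lemma ReOp_rotate:
  fixes X :: "'a::{complex_inner,complete_space} \<Rightarrow> 'a"
  assumes "bounded_op X"
  shows "ReOp (op_scale (exp (\<i> * of_real \<theta>)) X)
    = op_add (op_scale (of_real (cos \<theta>)) (ReOp X)) (op_scale (of_real (- sin \<theta>)) (ImOp X))"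
proof -
  have euler: "exp (\<i> * of_real \<theta>) = of_real (cos \<theta>) + \<i> * of_real (sin \<theta>)"
    by (simp add: cis_conv_exp [symmetric] complex_eq_iff)
  show ?thesis
    unfolding euler ReOp_def ImOp_def cadjoint_scale [OF assms]
    by (rule op_eqI) (simp add: op_add_def op_diff_def op_scale_def field_simps)
qed

section \<open>Coefficient pairs and combinations of operators\<close>

lemma cSUP_mult_left_nonneg:
  fixes f :: "'a \<Rightarrow> real"
  assumes "A \<noteq> {}" and "bdd_above (f ` A)" and "c \<ge> 0"
  shows "(SUP x\<in>A. c * f x) = c * (SUP x\<in>A. f x)"
proof -
  have "mono (\<lambda>y. c * y)"
    using assms(3) by (simp add: monoI mult_left_mono)
  moreover have "continuous (at_left (Sup (f ` A))) (\<lambda>y. c * y)"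
    by (intro continuous_intros)
  ultimately show ?thesis
    using continuous_at_Sup_mono [of "\<lambda>y. c * y" "f ` A"] assms(1,2) by (simp add: image_comp)
qed

lemma image_eq_if_retraction:
  assumes "\<And>x. x \<in> A \<Longrightarrow> f x \<in> A" and "\<And>x. x \<in> A \<Longrightarrow> g x \<in> A" and "\<And>x. f (g x) = x"
  shows "f ` A = A"
  using assms by (metis image_eqI image_subsetI subsetI subset_antisym)

lemma mem_unit_pairs [simp]: "(a, b) \<in> unit_pairs \<longleftrightarrow> (cmod a)\<^sup>2 + (cmod b)\<^sup>2 \<le> 1"
  by (simp add: unit_pairs_def)

lemma unit_pairs_nonempty: "unit_pairs \<noteq> {}"
proof -
  have "(0, 0) \<in> unit_pairs"
    by simp
  then show ?thesis
    by blast
qed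

lemma unit_pairs_cmod_le:
  assumes "l \<in> unit_pairs"
  shows "cmod (fst l) \<le> 1" and "cmod (snd l) \<le> 1"
proof -
  have "(cmod (fst l))\<^sup>2 + (cmod (snd l))\<^sup>2 \<le> 1"
    using assms by (cases l) simp
  then have "(cmod (fst l))\<^sup>2 \<le> 1" and "(cmod (snd l))\<^sup>2 \<le> 1"
    using zero_le_power2 [of "cmod (fst l)"] zero_le_power2 [of "cmod (snd l)"] by linarith+
  then show "cmod (fst l) \<le> 1" and "cmod (snd l) \<le> 1"
    by (simp_all add: abs_square_le_1)
qed

lemma cmod_add_le_sqrt2:
  assumes "(a, b) \<in> unit_pairs"
  shows "cmod a + cmod b \<le> sqrt 2"
proof (rule real_le_rsqrt)
  have "(cmod a + cmod b)\<^sup>2 \<le> 2 * ((cmod a)\<^sup>2 + (cmod b)\<^sup>2)"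
    using zero_le_power2 [of "cmod a - cmod b"] by (simp add: power2_eq_square algebra_simps)
  then show "(cmod a + cmod b)\<^sup>2 \<le> 2"
    using assms by simp
qed

lemma of_real_sqrt2_square [simp]: "of_real (sqrt 2) * of_real (sqrt 2) = (2::complex)"
  by (simp flip: of_real_mult)

definition hadamard :: "complex \<times> complex \<Rightarrow> complex \<times> complex" where
  "hadamard l = ((fst l + snd l) / of_real (sqrt 2), (fst l - snd l) / of_real (sqrt 2))"

lemma hadamard_hadamard [simp]: "hadamard (hadamard l) = l"
  by (simp add: hadamard_def field_simps prod_eq_iff)

lemma hadamard_mem_unit_pairs_iff: "hadamard l \<in> unit_pairs \<longleftrightarrow> l \<in> unit_pairs"
proof -
  have "(cmod (fst l + snd l))\<^sup>2 + (cmod (fst l - snd l))\<^sup>2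
      = 2 * ((cmod (fst l))\<^sup>2 + (cmod (snd l))\<^sup>2)"
    by (simp only: cmod_power2) (simp add: power2_eq_square algebra_simps)
  then show ?thesis
    by (cases l)
      (simp add: hadamard_def norm_divide power_divide add_divide_distrib [symmetric], arith)
qed

lemma hadamard_image_unit_pairs: "hadamard ` unit_pairs = unit_pairs"
  using hadamard_mem_unit_pairs_iff
  by (intro image_eq_if_retraction [where g = hadamard]) simp_all

lemma scale_snd_image_unit_pairs:
  assumes "cmod u = 1"
  shows "(\<lambda>l. (fst l, u * snd l)) ` unit_pairs = unit_pairs"
proof (rule image_eq_if_retraction [where g = "\<lambda>l. (fst l, cnj u * snd l)"])
  have "u * cnj u = 1"
    using assms by (simp add: complex_norm_square [symmetric])
  then show "(fst (fst l, cnj u * snd l), u * snd (fst l, cnj u * snd l)) = l" for l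
    by (simp add: mult.assoc [symmetric])
qed (use assms in \<open>auto simp: unit_pairs_def norm_mult\<close>)

lemma cnj_image_unit_pairs: "(\<lambda>l. (cnj (fst l), cnj (snd l))) ` unit_pairs = unit_pairs"
  by (rule image_eq_if_retraction [where g = "\<lambda>l. (cnj (fst l), cnj (snd l))"])
    (auto simp: unit_pairs_def)

lemma unit_circle_eq_range:
  "{(a, b). (a::real)\<^sup>2 + b\<^sup>2 = 1} = range (\<lambda>\<theta>. (cos \<theta>, - sin \<theta>))"
proof (intro equalityI subsetI)
  fix p :: "real \<times> real"
  assume "p \<in> {(a, b). a\<^sup>2 + b\<^sup>2 = 1}"
  then have "(fst p)\<^sup>2 + (- snd p)\<^sup>2 = 1"
    by auto
  then obtain \<theta> where "fst p = cos \<theta>" "- snd p = sin \<theta>"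
    using sincos_total_2pi by metis
  then show "p \<in> range (\<lambda>\<theta>. (cos \<theta>, - sin \<theta>))"
    by (auto intro: range_eqI [where x = \<theta>] simp: prod_eq_iff)
qed auto

abbreviation op_comb ::
    "complex \<times> complex \<Rightarrow> ('h::complex_inner \<Rightarrow> 'h) \<Rightarrow> ('h \<Rightarrow> 'h) \<Rightarrow> 'h \<Rightarrow> 'h"
  where "op_comb l B C \<equiv> op_add (op_scale (fst l) B) (op_scale (snd l) C)"

lemma op_comb_hadamard:
  "op_comb (hadamard l) (op_add B C) (op_diff B C) = op_scale (of_real (sqrt 2)) (op_comb l B C)"
  by (rule op_eqI) (simp add: hadamard_def op_add_def op_diff_def op_scale_def field_simps)

lemma op_comb_hadamard_ReOp_ImOp:
  "op_comb (hadamard (fst l, - (\<i> * snd l))) B (cadjoint B)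
    = op_scale (of_real (sqrt 2)) (op_comb l (ReOp B) (ImOp B))"
  by (rule op_eqI)
    (simp add: hadamard_def ReOp_def ImOp_def op_add_def op_diff_def op_scale_def field_simps)

lemma op_comb_same: "op_comb l B B = op_scale (fst l + snd l) B"
  by (rule op_eqI) (simp add: op_add_def op_scale_def algebra_simps)

lemma op_comb_rotation_cadjoint:
  fixes B :: "'a::{complex_inner,complete_space} \<Rightarrow> 'a"
  shows "bounded_op B \<Longrightarrow>
    op_comb (e / of_real (sqrt 2), cnj e / of_real (sqrt 2)) B (cadjoint B)
      = op_scale (of_real (sqrt 2)) (ReOp (op_scale e B))"
  by (simp add: ReOp_def, rule op_eqI) (simp add: op_add_def op_scale_def field_simps)

lemma op_comb_unitary_conj:
  fixes B C U :: "'a::{complex_inner,complete_space} \<Rightarrow> 'a"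
  shows "bounded_op U \<Longrightarrow>
    op_comb l (cadjoint U \<circ> B \<circ> U) (cadjoint U \<circ> C \<circ> U) = cadjoint U \<circ> op_comb l B C \<circ> U"
  by (rule op_eqI) (simp add: op_add_def op_scale_def cinner_cadjoint_left)

lemma wNe_eq_SUP_wN: "wNe N B C = (SUP l\<in>unit_pairs. wN N (op_comb l B C))"
  by (simp add: wNe_def wN_def)

section \<open>Generalized numerical radii\<close>

locale op_norm =
  fixes N :: "('h::{complex_inner,complete_space} \<Rightarrow> 'h) \<Rightarrow> real"
  assumes is_op_norm: "is_op_norm N"
begin

lemma N_nonneg: "bounded_op T \<Longrightarrow> 0 \<le> N T"
  and N_scale: "bounded_op T \<Longrightarrow> N (op_scale c T) = cmod c * N T"
  and N_add_le: "bounded_op S \<Longrightarrow> bounded_op T \<Longrightarrow> N (op_add S T) \<le> N S + N T"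
  using is_op_norm unfolding is_op_norm_def by blast+

lemma N_ReOp_le: "bounded_op T \<Longrightarrow> N (ReOp T) \<le> (N T + N (cadjoint T)) / 2"
  using N_add_le [of T "cadjoint T"] by (simp add: ReOp_def N_scale)

lemma bdd_above_wN:
  assumes "bounded_op X"
  shows "bdd_above (range (\<lambda>\<theta>. N (ReOp (op_scale (exp (\<i> * of_real \<theta>)) X))))"
proof (rule bdd_aboveI2)
  show "N (ReOp (op_scale (exp (\<i> * of_real \<theta>)) X)) \<le> (N X + N (cadjoint X)) / 2" for \<theta>
    using N_ReOp_le [of "op_scale (exp (\<i> * of_real \<theta>)) X"] assms by (simp add: N_scale)
qed

lemma N_ReOp_rotate_le_wN:
  "bounded_op X \<Longrightarrow> N (ReOp (op_scale (exp (\<i> * of_real \<theta>)) X)) \<le> wN N X"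
  unfolding wN_def by (rule cSUP_upper [OF UNIV_I bdd_above_wN])

lemma wN_least: "(\<And>\<theta>. N (ReOp (op_scale (exp (\<i> * of_real \<theta>)) X)) \<le> y) \<Longrightarrow> wN N X \<le> y"
  unfolding wN_def by (rule cSUP_least) auto

lemma wN_nonneg: "bounded_op X \<Longrightarrow> 0 \<le> wN N X"
  using N_nonneg N_ReOp_rotate_le_wN [of X 0] by (meson bounded_op_ReOp bounded_op_scale order_trans)

lemma N_ReOp_scale_le_wN:
  assumes X: "bounded_op X"
  shows "N (ReOp (op_scale \<mu> X)) \<le> cmod \<mu> * wN N X"
proof -
  define e where "e = exp (\<i> * of_real (Arg \<mu>))"
  have "\<mu> = of_real (cmod \<mu>) * e"
    unfolding e_def by (metis rcis_cmod_Arg rcis_def cis_conv_exp)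
  then have "op_scale \<mu> X = op_scale (of_real (cmod \<mu>)) (op_scale e X)"
    by simp
  then have "N (ReOp (op_scale \<mu> X)) = cmod \<mu> * N (ReOp (op_scale e X))"
    using X by (simp only: ReOp_scale_real bounded_op_scale N_scale bounded_op_ReOp) simp
  also have "\<dots> \<le> cmod \<mu> * wN N X"
    unfolding e_def using X by (intro mult_left_mono N_ReOp_rotate_le_wN) simp_all
  finally show ?thesis .
qed

lemma N_ReOp_le_wN: "bounded_op X \<Longrightarrow> N (ReOp X) \<le> wN N X"
  using N_ReOp_scale_le_wN [of X 1] by simp

lemma wN_scale_le:
  assumes X: "bounded_op X"
  shows "wN N (op_scale c X) \<le> cmod c * wN N X"
proof (rule wN_least)
  fix \<theta>
  show "N (ReOp (op_scale (exp (\<i> * of_real \<theta>)) (op_scale c X))) \<le> cmod c * wN N X"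
    using N_ReOp_scale_le_wN [OF X, of "exp (\<i> * of_real \<theta>) * c"] by (simp add: norm_mult)
qed

lemma wN_scale:
  assumes X: "bounded_op X"
  shows "wN N (op_scale c X) = cmod c * wN N X"
proof (rule antisym)
  show "wN N (op_scale c X) \<le> cmod c * wN N X"
    using X by (rule wN_scale_le)
  show "cmod c * wN N X \<le> wN N (op_scale c X)"
  proof (cases "c = 0")
    case True
    then show ?thesis
      using wN_nonneg [of "op_scale c X"] X by simp
  next
    case False
    have "wN N X \<le> cmod (inverse c) * wN N (op_scale c X)"
      using wN_scale_le [of "op_scale c X" "inverse c"] X False by simp
    moreover have "cmod c > 0"
      using False by simp
    ultimately show ?thesis
      by (simp add: norm_divide field_simps)
  qed
qed

lemma wN_add_le:
  assumes "bounded_op X" and "bounded_op Y"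
  shows "wN N (op_add X Y) \<le> wN N X + wN N Y"
proof (rule wN_least)
  fix \<theta>
  let ?e = "exp (\<i> * of_real \<theta>)"
  have "N (ReOp (op_scale ?e (op_add X Y)))
      \<le> N (ReOp (op_scale ?e X)) + N (ReOp (op_scale ?e Y))"
    using assms by (simp add: op_scale_add ReOp_add N_add_le)
  also have "\<dots> \<le> wN N X + wN N Y"
    using assms by (intro add_mono N_ReOp_rotate_le_wN)
  finally show "N (ReOp (op_scale ?e (op_add X Y))) \<le> wN N X + wN N Y" .
qed

lemma wN_cadjoint_le:
  assumes "bounded_op X"
  shows "wN N (cadjoint X) \<le> wN N X"
proof (rule wN_least)
  fix \<theta>
  let ?e = "exp (\<i> * of_real \<theta>)"
  have "N (ReOp (op_scale ?e (cadjoint X))) = N (ReOp (op_scale (cnj ?e) X))"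
    using ReOp_cadjoint [of "op_scale (cnj ?e) X"] assms by simp
  also have "\<dots> \<le> wN N X"
    using N_ReOp_scale_le_wN [OF assms, of "cnj ?e"] by simp
  finally show "N (ReOp (op_scale ?e (cadjoint X))) \<le> wN N X" .
qed

lemma wN_cadjoint: "bounded_op X \<Longrightarrow> wN N (cadjoint X) = wN N X"
  using wN_cadjoint_le [of X] wN_cadjoint_le [of "cadjoint X"] by simp

lemma wN_unitary_conj:
  assumes inv: "weakly_unitarily_invariant N" and U: "unitary_op U" and X: "bounded_op X"
  shows "wN N (cadjoint U \<circ> X \<circ> U) = wN N X"
proof -
  have "bounded_op U"
    using U unfolding unitary_op_def by blast
  then show ?thesis
    using inv U X unfolding wN_def weakly_unitarily_invariant_def by (simp add: ReOp_unitary_conj)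
qed

lemma wN_eq_SUP_unit_circle:
  assumes "bounded_op X"
  shows "wN N X = (SUP ab\<in>{(a, b). (a::real)\<^sup>2 + b\<^sup>2 = 1}.
    N (op_add (op_scale (of_real (fst ab)) (ReOp X)) (op_scale (of_real (snd ab)) (ImOp X))))"
  unfolding unit_circle_eq_range wN_def image_image using assms by (simp add: ReOp_rotate)

lemma wN_op_comb_le:
  assumes B: "bounded_op B" and C: "bounded_op C" and l: "l \<in> unit_pairs"
  shows "wN N (op_comb l B C) \<le> wN N B + wN N C"
proof -
  have "wN N (op_comb l B C) \<le> cmod (fst l) * wN N B + cmod (snd l) * wN N C"
    using wN_add_le [of "op_scale (fst l) B" "op_scale (snd l) C"] B C by (simp add: wN_scale)
  also have "\<dots> \<le> wN N B + wN N C"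
    using unit_pairs_cmod_le [OF l] wN_nonneg [OF B] wN_nonneg [OF C]
    by (intro add_mono mult_left_le_one_le) auto
  finally show ?thesis .
qed

lemma bdd_above_wNe:
  "bounded_op B \<Longrightarrow> bounded_op C \<Longrightarrow> bdd_above ((\<lambda>l. wN N (op_comb l B C)) ` unit_pairs)"
  by (rule bdd_aboveI2 [where M = "wN N B + wN N C"]) (rule wN_op_comb_le)

lemma wN_le_wNe:
  "bounded_op B \<Longrightarrow> bounded_op C \<Longrightarrow> l \<in> unit_pairs \<Longrightarrow> wN N (op_comb l B C) \<le> wNe N B C"
  unfolding wNe_eq_SUP_wN by (rule cSUP_upper [OF _ bdd_above_wNe])

lemma wNe_least: "(\<And>l. l \<in> unit_pairs \<Longrightarrow> wN N (op_comb l B C) \<le> y) \<Longrightarrow> wNe N B C \<le> y"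
  unfolding wNe_eq_SUP_wN using unit_pairs_nonempty by (intro cSUP_least) auto

lemma wNe_reparametrize:
  assumes B: "bounded_op B" and C: "bounded_op C"
    and \<phi>: "\<phi> ` unit_pairs = unit_pairs" and "r \<ge> 0"
    and scale: "\<And>l. l \<in> unit_pairs \<Longrightarrow> wN N (op_comb (\<phi> l) B' C') = r * wN N (op_comb l B C)"
  shows "wNe N B' C' = r * wNe N B C"
proof -
  have "wNe N B' C' = (SUP l\<in>\<phi> ` unit_pairs. wN N (op_comb l B' C'))"
    unfolding wNe_eq_SUP_wN \<phi> ..
  also have "\<dots> = (SUP l\<in>unit_pairs. r * wN N (op_comb l B C))"
    unfolding image_image using scale by (rule SUP_cong [OF refl])
  also have "\<dots> = r * wNe N B C"
    unfolding wNe_eq_SUP_wN using unit_pairs_nonempty bdd_above_wNe [OF B C] \<open>r \<ge> 0\<close>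
    by (rule cSUP_mult_left_nonneg)
  finally show ?thesis .
qed

lemma wNe_sum_diff:
  assumes B: "bounded_op B" and C: "bounded_op C"
  shows "wNe N (op_add B C) (op_diff B C) = sqrt 2 * wNe N B C"
  by (rule wNe_reparametrize [OF B C hadamard_image_unit_pairs])
    (simp_all add: op_comb_hadamard wN_scale B C)

lemma wNe_self_cadjoint_eq_ReOp_ImOp:
  assumes B: "bounded_op B"
  shows "wNe N B (cadjoint B) = sqrt 2 * wNe N (ReOp B) (ImOp B)"
proof -
  have "(\<lambda>l. (fst l, - \<i> * snd l)) ` unit_pairs = unit_pairs"
    by (rule scale_snd_image_unit_pairs) simp
  then have "(hadamard \<circ> (\<lambda>l. (fst l, - \<i> * snd l))) ` unit_pairs = unit_pairs"
    by (simp only: image_comp [symmetric] hadamard_image_unit_pairs)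
  then show ?thesis
    by (rule wNe_reparametrize [OF bounded_op_ReOp [OF B] bounded_op_ImOp [OF B] _])
      (simp_all add: op_comb_hadamard_ReOp_ImOp wN_scale B)
qed

lemma wNe_self_cadjoint_eq_wN:
  assumes B: "bounded_op B"
  shows "wNe N B (cadjoint B) = sqrt 2 * wN N B"
proof (rule antisym)
  show "wNe N B (cadjoint B) \<le> sqrt 2 * wN N B"
  proof (rule wNe_least)
    fix l
    assume l: "l \<in> unit_pairs"
    have "wN N (op_comb l B (cadjoint B)) \<le> (cmod (fst l) + cmod (snd l)) * wN N B"
      using wN_add_le [of "op_scale (fst l) B" "op_scale (snd l) (cadjoint B)"] B
      by (simp add: wN_scale wN_cadjoint distrib_right)
    also have "\<dots> \<le> sqrt 2 * wN N B"
      using cmod_add_le_sqrt2 [of "fst l" "snd l"] l wN_nonneg [OF B] by (intro mult_right_mono) auto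
    finally show "wN N (op_comb l B (cadjoint B)) \<le> sqrt 2 * wN N B" .
  qed
  have "wN N B \<le> wNe N B (cadjoint B) / sqrt 2"
  proof (rule wN_least)
    fix \<theta>
    define e where "e = exp (\<i> * of_real \<theta>)"
    define l where "l = (e / of_real (sqrt 2), cnj e / of_real (sqrt 2))"
    have "l \<in> unit_pairs"
      by (simp add: l_def e_def norm_divide power_divide)
    have "sqrt 2 * N (ReOp (op_scale e B)) = sqrt 2 * N (ReOp (ReOp (op_scale e B)))"
      using B by (simp add: ReOp_ReOp)
    also have "\<dots> \<le> sqrt 2 * wN N (ReOp (op_scale e B))"
      using B by (intro mult_left_mono N_ReOp_le_wN) simp_all
    also have "\<dots> = wN N (op_comb l B (cadjoint B))"
      by (simp only: l_def op_comb_rotation_cadjoint [OF B]) (simp add: wN_scale B)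
    also have "\<dots> \<le> wNe N B (cadjoint B)"
      using B \<open>l \<in> unit_pairs\<close> by (intro wN_le_wNe) simp_all
    finally show "N (ReOp (op_scale (exp (\<i> * of_real \<theta>)) B)) \<le> wNe N B (cadjoint B) / sqrt 2"
      unfolding e_def by (simp add: field_simps)
  qed
  then show "sqrt 2 * wN N B \<le> wNe N B (cadjoint B)"
    by (simp add: field_simps)
qed

lemma wNe_same_eq_wN:
  assumes B: "bounded_op B"
  shows "wNe N B B = sqrt 2 * wN N B"
proof -
  have "wNe N B B = (SUP l\<in>unit_pairs. cmod (fst l + snd l) * wN N B)"
    unfolding wNe_eq_SUP_wN op_comb_same using B by (simp add: wN_scale)
  also have "\<dots> = sqrt 2 * wN N B"
  proof (rule cSup_eq_maximum)
    have "1 / of_real (sqrt 2) + 1 / of_real (sqrt 2) = (of_real (sqrt 2) :: complex)"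
      by (simp add: field_simps)
    then show "sqrt 2 * wN N B \<in> (\<lambda>l. cmod (fst l + snd l) * wN N B) ` unit_pairs"
      by (intro image_eqI [where x = "(1 / of_real (sqrt 2), 1 / of_real (sqrt 2))"])
        (simp_all add: norm_divide power_divide)
    have "cmod (fst l + snd l) * wN N B \<le> sqrt 2 * wN N B" if "l \<in> unit_pairs" for l
      using norm_triangle_ineq [of "fst l" "snd l"] cmod_add_le_sqrt2 [of "fst l" "snd l"] that
        wN_nonneg [OF B]
      by (intro mult_right_mono) auto
    then show "x \<le> sqrt 2 * wN N B"
      if "x \<in> (\<lambda>l. cmod (fst l + snd l) * wN N B) ` unit_pairs" for x
      using that by blast
  qed
  finally show ?thesis .
qed

lemma wNe_cadjoint:
  assumes B: "bounded_op B" and C: "bounded_op C"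
  shows "wNe N (cadjoint B) (cadjoint C) = wNe N B C"
proof -
  have "wNe N (cadjoint B) (cadjoint C) = 1 * wNe N B C"
  proof (rule wNe_reparametrize [OF B C cnj_image_unit_pairs])
    show "wN N (op_comb (cnj (fst l), cnj (snd l)) (cadjoint B) (cadjoint C))
        = 1 * wN N (op_comb l B C)" for l
      using wN_cadjoint [of "op_comb l B C"] B C by simp
  qed simp
  then show ?thesis
    by simp
qed

lemma wNe_unitary_conj:
  assumes inv: "weakly_unitarily_invariant N" and U: "unitary_op U"
    and B: "bounded_op B" and C: "bounded_op C"
  shows "wNe N (cadjoint U \<circ> B \<circ> U) (cadjoint U \<circ> C \<circ> U) = wNe N B C"
proof -
  have "bounded_op U"
    using U unfolding unitary_op_def by blast
  then show ?thesis
    unfolding wNe_eq_SUP_wN using B C by (simp add: op_comb_unitary_conj wN_unitary_conj [OF inv U])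
qed

lemma wNe_eq_SUP_unit_circle:
  assumes "bounded_op B" and "bounded_op C"
  shows "wNe N B C = (SUP l\<in>unit_pairs. SUP ab\<in>{(a, b). (a::real)\<^sup>2 + b\<^sup>2 = 1}.
    N (op_add (op_scale (of_real (fst ab)) (ReOp (op_comb l B C)))
              (op_scale (of_real (snd ab)) (ImOp (op_comb l B C)))))"
  unfolding wNe_eq_SUP_wN using assms by (intro SUP_cong refl wN_eq_SUP_unit_circle) simp

end

theorem proposition2p3:
  fixes B C :: "'h::{complex_inner, complete_space} \<Rightarrow> 'h"
    and N :: "('h \<Rightarrow> 'h) \<Rightarrow> real"
  assumes N: "is_op_norm N"
    and B: "bounded_op B" and C: "bounded_op C"
  shows "wNe N B C = 1 / sqrt 2 * wNe N (op_add B C) (op_diff B C)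
    \<and> wNe N (ReOp B) (ImOp B) = 1 / sqrt 2 * wNe N B (cadjoint B)
    \<and> 1 / sqrt 2 * wNe N B (cadjoint B) = wN N B
    \<and> wNe N B B = sqrt 2 * wN N B
    \<and> wNe N (cadjoint B) (cadjoint C) = wNe N B C
    \<and> (weakly_unitarily_invariant N \<longrightarrow>
           (\<forall>U. unitary_op U \<longrightarrow>
              wNe N (cadjoint U \<circ> B \<circ> U) (cadjoint U \<circ> C \<circ> U) = wNe N B C))
    \<and> wNe N B C =
           (SUP l\<in>unit_pairs. SUP ab\<in>{(a, b). (a::real)\<^sup>2 + b\<^sup>2 = 1}.
              N (op_add (op_scale (complex_of_real (fst ab))
                           (ReOp (op_add (op_scale (fst l) B) (op_scale (snd l) C))))
                        (op_scale (complex_of_real (snd ab))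
                           (ImOp (op_add (op_scale (fst l) B) (op_scale (snd l) C))))))"
proof -
  interpret op_norm N
    using N by unfold_locales
  have sum_diff: "wNe N (op_add B C) (op_diff B C) = sqrt 2 * wNe N B C"
    using B C by (rule wNe_sum_diff)
  have Re_Im: "wNe N B (cadjoint B) = sqrt 2 * wNe N (ReOp B) (ImOp B)"
    using B by (rule wNe_self_cadjoint_eq_ReOp_ImOp)
  have cadjoint_pair: "wNe N B (cadjoint B) = sqrt 2 * wN N B"
    using B by (rule wNe_self_cadjoint_eq_wN)
  show ?thesis
    using sum_diff Re_Im cadjoint_pair wNe_same_eq_wN [OF B] wNe_cadjoint [OF B C]
      wNe_unitary_conj [OF _ _ B C] wNe_eq_SUP_unit_circle [OF B C]
    by simp
qed

end
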